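(* Let $C$ be a convex subset of the Euclidean plane $\mathbb{R}^2$ (not necessarily closed or bounded). Then for every finite point set $P \subset \mathbb{R}^2$, the straight-line drawing of $G_{st}(P,C)$ is a plane graph.
   Context: For a finite set $P \subset \mathbb{R}^2$ and a set $C \subseteq \mathbb{R}^2$, $G_{st}(P,C)$ is the graph with vertex set $P$ in which two distinct points $u,v \in P$ are adjacent if and only if there is a positively scaled translate (homothet) $\lambda C + \mathbf{v} = \{\lambda x + \mathbf{v} : x \in C\}$, with $\lambda > 0$ and $\mathbf{v} \in \mathbb{R}^2$, such that $P \cap (\lambda C + \mathbf{v}) = \{u,v\}$. The graph is drawn with each vertex at its point and each edge as the closed straight-line segment between its endpoints. A drawing is a plane graph if (1) no vertex lies on an edge of which it is not an endpoint, and (2) no two edges cross, i.e., two edges may intersect only at a common endpoint. *)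

theory Defs
  imports "HOL-Analysis.Analysis"
begin

definition homothet :: "real \<Rightarrow> real^2 \<Rightarrow> (real^2) set \<Rightarrow> (real^2) set" where
  "homothet lam v C = (\<lambda>x. lam *\<^sub>R x + v) ` C"

definition st_adj :: "(real^2) set \<Rightarrow> (real^2) set \<Rightarrow> real^2 \<Rightarrow> real^2 \<Rightarrow> bool" where
  "st_adj P C u v \<longleftrightarrow> u \<in> P \<and> v \<in> P \<and> u \<noteq> v \<and>
     (\<exists>lam v0. lam > 0 \<and> P \<inter> homothet lam v0 C = {u, v})"

definition plane_drawing :: "(real^2) set \<Rightarrow> (real^2 \<Rightarrow> real^2 \<Rightarrow> bool) \<Rightarrow> bool" where
  "plane_drawing P E \<longleftrightarrow>
     (\<forall>u v w. E u v \<and> w \<in> P \<and> w \<noteq> u \<and> w \<noteq> v \<longrightarrow> w \<notin> closed_segment u v) \<and>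
     (\<forall>u v x y. E u v \<and> E x y \<and> {u, v} \<noteq> {x, y} \<longrightarrow>
        closed_segment u v \<inter> closed_segment x y \<subseteq> {u, v} \<inter> {x, y})"

end

theory Submission
  imports Defs
begin

text \<open>Suppose two edges \<open>uv\<close> and \<open>xy\<close> cross at a point \<open>z\<close> interior to both segments, and let
  \<open>K\<^sub>1 \<supseteq> [u,v]\<close>, \<open>K\<^sub>2 \<supseteq> [x,y]\<close> be homothets of \<open>C\<close> witnessing the edges. If the segments are not
  parallel, pull both back to \<open>C\<close>: \<open>z\<close> has preimages \<open>p, q \<in> C\<close>, and writing \<open>q - p\<close> in the basis
  \<open>u - v, x - y\<close>, a suitable convex combination of points of \<open>C\<close> shows that one endpoint of one
  edge lies in the homothet of the other edge, i.e. that homothet contains a third point of \<open>P\<close>.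
  If the segments are parallel they lie on a common line, and since neither contains an endpoint of
  the other except its own, they coincide. A vertex on an edge is excluded directly, since the
  segment lies in the witnessing convex homothet.\<close>

lemma mem_homothet_iff:
  assumes "lam > 0"
  shows "w \<in> homothet lam v0 C \<longleftrightarrow> (1 / lam) *\<^sub>R (w - v0) \<in> C"
proof
  assume "w \<in> homothet lam v0 C"
  then obtain c where "c \<in> C" "w = lam *\<^sub>R c + v0" by (auto simp: homothet_def)
  then show "(1 / lam) *\<^sub>R (w - v0) \<in> C" using assms by simp
next
  assume "(1 / lam) *\<^sub>R (w - v0) \<in> C"
  moreover have "w = lam *\<^sub>R ((1 / lam) *\<^sub>R (w - v0)) + v0" using assms by simp
  ultimately show "w \<in> homothet lam v0 C" unfolding homothet_def by blast
qed

lemma convex_homothet: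
  assumes "convex C"
  shows "convex (homothet lam v0 C)"
proof -
  have "homothet lam v0 C = (\<lambda>x. v0 + lam *\<^sub>R x) ` C"
    unfolding homothet_def by (simp add: add.commute)
  then show ?thesis using convex_affinity[OF assms] by simp
qed

lemma convex_combination3_mem:
  fixes x y z :: "'a::real_vector"
  assumes "convex S" "x \<in> S" "y \<in> S" "z \<in> S" "a \<ge> 0" "b \<ge> 0" "c \<ge> 0" "a + b + c = 1"
  shows "a *\<^sub>R x + b *\<^sub>R y + c *\<^sub>R z \<in> S"
proof -
  have "convex hull {x, y, z} \<subseteq> S" using assms by (intro hull_minimal) auto
  moreover have "a *\<^sub>R x + b *\<^sub>R y + c *\<^sub>R z \<in> convex hull {x, y, z}"
    unfolding convex_hull_3 using assms by blast
  ultimately show ?thesis by blast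
qed

lemma convex_cone_exchange:
  fixes p q e f :: "'a::real_vector"
  assumes cv: "convex S" and pS: "p \<in> S" and pbS: "p - b *\<^sub>R e \<in> S" and qS: "q \<in> S"
    and qgS: "q + g *\<^sub>R f \<in> S" and qp: "q - p = \<xi> *\<^sub>R e + \<eta> *\<^sub>R f"
    and xi: "\<xi> \<ge> 0" and eta: "\<eta> \<ge> 0" and b: "b > 0" and g: "g > 0" and r: "\<rho> > 0"
  shows "q - (\<rho>*b) *\<^sub>R e \<in> S \<or> p + (g/\<rho>) *\<^sub>R f \<in> S"
  \<comment> \<open>\<open>q - (\<rho> b) e\<close> is a convex combination of \<open>p - b e\<close>, \<open>q + g f\<close>, \<open>q\<close>, or \<open>p + (g/\<rho>) f\<close> one of
    \<open>p\<close>, \<open>p - b e\<close>, \<open>q + g f\<close>; the case split decides which weights are nonnegative.\<close>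
proof (cases "\<rho> * b * (g + \<eta>) \<le> g * (b + \<xi>)")
  case True
  define P where "P = \<rho>*b/(b+\<xi>)"
  define Q where "Q = P*\<eta>/g"
  define R where "R = 1 - P - Q"
  have P0: "P \<ge> 0" using b xi r by (simp add: P_def)
  have Q0: "Q \<ge> 0" using P0 eta g by (simp add: Q_def)
  have "P * (g + \<eta>) \<le> g" using True b xi by (simp add: P_def field_simps)
  then have "P + Q \<le> 1" using g by (simp add: Q_def field_simps)
  then have R0: "R \<ge> 0" by (simp add: R_def)
  have qq: "q = p + \<xi> *\<^sub>R e + \<eta> *\<^sub>R f" using qp by (simp add: algebra_simps)
  have "P *\<^sub>R (p - b *\<^sub>R e) + Q *\<^sub>R (q + g *\<^sub>R f) + R *\<^sub>R q
      = (P+Q+R) *\<^sub>R p + ((Q+R)*\<xi> - P*b) *\<^sub>R e + ((Q+R)*\<eta> + Q*g) *\<^sub>R f"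
    unfolding qq by (simp add: algebra_simps)
  also have "(Q+R)*\<xi> - P*b = \<xi> - \<rho>*b"
  proof -
    have bx: "b + \<xi> > 0" using b xi by simp
    have "(Q+R)*\<xi> - P*b = \<xi> - P*(b+\<xi>)" by (simp add: R_def algebra_simps)
    also have "P*(b+\<xi>) = \<rho>*b" using bx by (simp add: P_def)
    finally show ?thesis .
  qed
  also have "(Q+R)*\<eta> + Q*g = \<eta>" using g by (simp add: R_def Q_def field_simps)
  also have "P+Q+R = 1" by (simp add: R_def)
  finally have "P *\<^sub>R (p - b *\<^sub>R e) + Q *\<^sub>R (q + g *\<^sub>R f) + R *\<^sub>R q = q - (\<rho>*b) *\<^sub>R e"
    unfolding qq by (simp add: algebra_simps)
  moreover have "P *\<^sub>R (p - b *\<^sub>R e) + Q *\<^sub>R (q + g *\<^sub>R f) + R *\<^sub>R q \<in> S"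
    using convex_combination3_mem[OF cv pbS qgS qS P0 Q0 R0] by (simp add: R_def)
  ultimately show ?thesis by simp
next
  case False
  define R where "R = g/(\<rho>*(\<eta>+g))"
  define Q where "Q = R*\<xi>/b"
  define P where "P = 1 - Q - R"
  have R0: "R \<ge> 0" using g eta r by (simp add: R_def)
  have Q0: "Q \<ge> 0" using R0 xi b by (simp add: Q_def)
  have "R * (b + \<xi>) \<le> b"
  proof -
    have d: "\<rho>*(\<eta>+g) > 0" using r g eta by simp
    have "g * (b + \<xi>) \<le> b * (\<rho>*(\<eta>+g))" using False by (simp add: algebra_simps)
    then have "g * (b + \<xi>) / (\<rho>*(\<eta>+g)) \<le> b" using d by (simp add: divide_le_eq)
    then show ?thesis by (simp add: R_def)
  qed
  then have "Q + R \<le> 1" using b by (simp add: Q_def field_simps)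
  then have P0: "P \<ge> 0" by (simp add: P_def)
  have qq: "q = p + \<xi> *\<^sub>R e + \<eta> *\<^sub>R f" using qp by (simp add: algebra_simps)
  have "P *\<^sub>R p + Q *\<^sub>R (p - b *\<^sub>R e) + R *\<^sub>R (q + g *\<^sub>R f)
      = (P+Q+R) *\<^sub>R p + (R*\<xi> - Q*b) *\<^sub>R e + (R*\<eta> + R*g) *\<^sub>R f"
    unfolding qq by (simp add: algebra_simps)
  also have "R*\<xi> - Q*b = 0" using b by (simp add: Q_def)
  also have "R*\<eta> + R*g = g/\<rho>"
  proof -
    have "\<eta>+g \<noteq> 0" using g eta by simp
    then have "R*(\<eta>+g) = g/\<rho>" using r by (simp add: R_def)
    then show ?thesis by (simp add: algebra_simps)
  qed
  also have "P+Q+R = 1" by (simp add: P_def)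
  finally have "P *\<^sub>R p + Q *\<^sub>R (p - b *\<^sub>R e) + R *\<^sub>R (q + g *\<^sub>R f) = p + (g/\<rho>) *\<^sub>R f"
    by simp
  moreover have "P *\<^sub>R p + Q *\<^sub>R (p - b *\<^sub>R e) + R *\<^sub>R (q + g *\<^sub>R f) \<in> S"
    using convex_combination3_mem[OF cv pS pbS qgS P0 Q0 R0] by (simp add: P_def)
  ultimately show ?thesis by simp
qed

lemma convex_cross_exchange:
  fixes p q e f :: "'a::real_vector"
  assumes cv: "convex S" and pS: "p \<in> S" and qS: "q \<in> S" and l1: "l1 > 0" and l2: "l2 > 0"
    and s: "0 < s" "s < 1" and t: "0 < t" "t < 1"
    and hu: "p + (s/l1) *\<^sub>R e \<in> S" and hv: "p - ((1-s)/l1) *\<^sub>R e \<in> S"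
    and hx: "q + (t/l2) *\<^sub>R f \<in> S" and hy: "q - ((1-t)/l2) *\<^sub>R f \<in> S"
    and qp: "q - p = \<xi> *\<^sub>R e + \<eta> *\<^sub>R f"
  shows "q + (s/l2) *\<^sub>R e \<in> S \<or> q - ((1-s)/l2) *\<^sub>R e \<in> S \<or>
         p + (t/l1) *\<^sub>R f \<in> S \<or> p - ((1-t)/l1) *\<^sub>R f \<in> S"
proof -
  define \<rho> where "\<rho> = l1/l2"
  have r: "\<rho> > 0" using l1 l2 by (simp add: \<rho>_def)
  have scale_e: "\<rho> * ((1-s)/l1) = (1-s)/l2" "\<rho> * (s/l1) = s/l2"
    using l1 l2 by (simp_all add: \<rho>_def)
  have scale_f: "(t/l2)/\<rho> = t/l1" "((1-t)/l2)/\<rho> = (1-t)/l1"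
    using l1 l2 by (simp_all add: \<rho>_def)
  have e_step_pos: "(1-s)/l1 > 0" "s/l1 > 0" using s l1 by simp_all
  have f_step_pos: "t/l2 > 0" "(1-t)/l2 > 0" using t l2 by simp_all
  have hu_neg: "p - (s/l1) *\<^sub>R (-e) \<in> S" using hu by simp
  have hy_neg: "q + ((1-t)/l2) *\<^sub>R (-f) \<in> S" using hy by simp
  \<comment> \<open>Replacing \<open>e\<close> by \<open>-e\<close> or \<open>f\<close> by \<open>-f\<close> moves every sign pattern of \<open>\<xi>, \<eta>\<close> into the first quadrant.\<close>
  consider "\<xi> \<ge> 0" "\<eta> \<ge> 0" | "\<xi> \<le> 0" "\<eta> \<ge> 0" | "\<xi> \<ge> 0" "\<eta> \<le> 0" | "\<xi> \<le> 0" "\<eta> \<le> 0"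
    by linarith
  then show ?thesis
  proof cases
    case 1
    from convex_cone_exchange[OF cv pS hv qS hx qp 1 e_step_pos(1) f_step_pos(1) r] show ?thesis
      unfolding scale_e scale_f by blast
  next
    case 2
    have qp': "q - p = (-\<xi>) *\<^sub>R (-e) + \<eta> *\<^sub>R f" using qp by simp
    from convex_cone_exchange[OF cv pS hu_neg qS hx qp' _ 2(2) e_step_pos(2) f_step_pos(1) r] 2(1) show ?thesis
      unfolding scale_e scale_f by auto
  next
    case 3
    have qp': "q - p = \<xi> *\<^sub>R e + (-\<eta>) *\<^sub>R (-f)" using qp by simp
    from convex_cone_exchange[OF cv pS hv qS hy_neg qp' 3(1) _ e_step_pos(1) f_step_pos(2) r] 3(2) show ?thesis
      unfolding scale_e scale_f by auto
  next
    case 4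
    have qp': "q - p = (-\<xi>) *\<^sub>R (-e) + (-\<eta>) *\<^sub>R (-f)" using qp by simp
    from convex_cone_exchange[OF cv pS hu_neg qS hy_neg qp' _ _ e_step_pos(2) f_step_pos(2) r] 4 show ?thesis
      unfolding scale_e scale_f by auto
  qed
qed

lemma real2_eq_lincomb_nonparallel:
  fixes e f w :: "real^2"
  assumes "e \<noteq> 0" and "\<nexists>k. f = k *\<^sub>R e"
  obtains \<xi> \<eta> where "w = \<xi> *\<^sub>R e + \<eta> *\<^sub>R f"
proof -
  have "f \<notin> span {e}" using assms(2) by (auto simp: span_singleton)
  then have ind: "independent {f, e}" using assms(1) by (simp add: independent_insertI)
  have "f \<noteq> e" using assms(2) by (metis scaleR_one)
  then have "dim (UNIV :: (real^2) set) \<le> card {f, e}" by simp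
  then have "w \<in> span {f, e}" using card_ge_dim_independent[OF _ ind] by blast
  then show ?thesis using that by (auto simp: span_insert span_singleton algebra_simps)
qed

lemma homothets_crossing_segments:
  fixes C :: "(real^2) set"
  assumes cv: "convex C" and l1: "l1 > 0" and l2: "l2 > 0"
    and uv: "u \<in> homothet l1 a1 C" "v \<in> homothet l1 a1 C"
    and xy: "x \<in> homothet l2 a2 C" "y \<in> homothet l2 a2 C"
    and zuv: "z \<in> open_segment u v" and zxy: "z \<in> open_segment x y"
    and nonpar: "\<nexists>k. x - y = k *\<^sub>R (u - v)"
  shows "u \<in> homothet l2 a2 C \<or> v \<in> homothet l2 a2 C \<or>
         x \<in> homothet l1 a1 C \<or> y \<in> homothet l1 a1 C"
proof -
  obtain s where s: "0 < s" "s < 1" "z = (1 - s) *\<^sub>R u + s *\<^sub>R v"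
    using zuv by (auto simp: in_segment)
  obtain t where t: "0 < t" "t < 1" "z = (1 - t) *\<^sub>R x + t *\<^sub>R y"
    using zxy by (auto simp: in_segment)
  define e where "e = u - v"
  define f where "f = x - y"
  have "z \<in> homothet l1 a1 C" "z \<in> homothet l2 a2 C"
    using zuv zxy uv xy convex_homothet[OF cv] open_closed_segment
    by (meson closed_segment_subset subsetD)+
  define p where "p = (1 / l1) *\<^sub>R (z - a1)"
  define q where "q = (1 / l2) *\<^sub>R (z - a2)"
  have pC: "p \<in> C" and qC: "q \<in> C"
    using \<open>z \<in> homothet l1 a1 C\<close> \<open>z \<in> homothet l2 a2 C\<close> l1 l2
    by (simp_all add: mem_homothet_iff p_def q_def)
  have uv_line: "u = z + s *\<^sub>R e" "v = z - (1 - s) *\<^sub>R e"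
    unfolding e_def s(3) by (simp_all add: algebra_simps)
  have xy_line: "x = z + t *\<^sub>R f" "y = z - (1 - t) *\<^sub>R f"
    unfolding f_def t(3) by (simp_all add: algebra_simps)
  have "u \<noteq> v" using zuv by auto
  then obtain \<xi> \<eta> where "q - p = \<xi> *\<^sub>R e + \<eta> *\<^sub>R f"
    using nonpar real2_eq_lincomb_nonparallel unfolding e_def f_def by (metis eq_iff_diff_eq_0)
  from convex_cross_exchange[OF cv pC qC l1 l2 s(1,2) t(1,2) _ _ _ _ this]
  show ?thesis
    using uv xy l1 l2 unfolding uv_line xy_line mem_homothet_iff[OF l1] mem_homothet_iff[OF l2] p_def q_def
    by (simp add: algebra_simps diff_divide_distrib)
qed

lemma closed_segment_line_param:
  fixes z e :: "'a::real_vector"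
  assumes "r \<in> closed_segment a b"
  shows "z + r *\<^sub>R e \<in> closed_segment (z + a *\<^sub>R e) (z + b *\<^sub>R e)"
proof -
  obtain m where m: "0 \<le> m" "m \<le> 1" "r = (1 - m) * a + m * b"
    using assms by (auto simp: in_segment)
  have "(1 - m) *\<^sub>R (z + a *\<^sub>R e) + m *\<^sub>R (z + b *\<^sub>R e) = z + ((1 - m) * a + m * b) *\<^sub>R e"
    by (simp add: algebra_simps)
  then show ?thesis using m by (auto simp: in_segment)
qed

lemma interval_endpoints_eq:
  fixes \<alpha> \<beta> \<gamma> \<delta> :: real
  assumes "\<alpha> < 0" "0 < \<beta>" "\<gamma> < 0 \<and> 0 < \<delta> \<or> \<delta> < 0 \<and> 0 < \<gamma>"
    and "\<gamma> \<in> closed_segment \<alpha> \<beta> \<Longrightarrow> \<gamma> \<in> {\<alpha>, \<beta>}"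
    and "\<delta> \<in> closed_segment \<alpha> \<beta> \<Longrightarrow> \<delta> \<in> {\<alpha>, \<beta>}"
    and "\<alpha> \<in> closed_segment \<gamma> \<delta> \<Longrightarrow> \<alpha> \<in> {\<gamma>, \<delta>}"
    and "\<beta> \<in> closed_segment \<gamma> \<delta> \<Longrightarrow> \<beta> \<in> {\<gamma>, \<delta>}"
  shows "{\<alpha>, \<beta>} = {\<gamma>, \<delta>}"
  using assms unfolding closed_segment_eq_real_ivl
  by (smt (verit) atLeastAtMost_iff insert_iff singletonD insert_commute)

lemma collinear_segments_eq:
  fixes u v x y z :: "'a::real_vector"
  assumes zuv: "z \<in> open_segment u v" and zxy: "z \<in> open_segment x y"
    and par: "x - y = k *\<^sub>R (u - v)"
    and "closed_segment u v \<inter> {x, y} \<subseteq> {u, v}" and "closed_segment x y \<inter> {u, v} \<subseteq> {x, y}"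
  shows "{u, v} = {x, y}"
proof -
  obtain s where s: "0 < s" "s < 1" "z = (1 - s) *\<^sub>R u + s *\<^sub>R v"
    using zuv by (auto simp: in_segment)
  obtain t where t: "0 < t" "t < 1" "z = (1 - t) *\<^sub>R x + t *\<^sub>R y"
    using zxy by (auto simp: in_segment)
  define e where "e = u - v"
  define L where "L r = z + r *\<^sub>R e" for r
  have "u \<noteq> v" "x \<noteq> y" using zuv zxy by auto
  then have "e \<noteq> 0" "k \<noteq> 0" using par by (auto simp: e_def)
  then have inj: "inj L" by (auto simp: L_def inj_on_def)
  have uv_line: "u = L s" "v = L (s - 1)"
    unfolding L_def e_def s(3) by (simp_all add: algebra_simps)
  have xy_line: "x = L (t * k)" "y = L ((t - 1) * k)"
    unfolding L_def e_def t(3) scaleR_scaleR [symmetric] par [symmetric]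
    by (simp_all add: algebra_simps)
  note pts = uv_line xy_line
  have seg: "L r \<in> closed_segment (L a) (L b)" if "r \<in> closed_segment a b" for r a b
    unfolding L_def using that by (rule closed_segment_line_param)
  have ends: "r \<in> {a, b}" if "L r \<in> {L a, L b}" for r a b
    using that inj by (auto dest: injD)
  have on_uv: "r \<in> {s - 1, s}" if "r \<in> closed_segment (s - 1) s" "L r \<in> {x, y}" for r
  proof -
    have "L r \<in> closed_segment u v"
      using seg[OF that(1)] pts by (simp add: closed_segment_commute)
    then show ?thesis using assms(4) that(2) pts by (intro ends) blast
  qed
  have on_xy: "r \<in> {t * k, (t - 1) * k}"
    if "r \<in> closed_segment (t * k) ((t - 1) * k)" "L r \<in> {u, v}" for r
  proof -
    have "L r \<in> closed_segment x y" using seg[OF that(1)] pts by simp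
    then show ?thesis using assms(5) that(2) pts by (intro ends) blast
  qed
  have "{s - 1, s} = {t * k, (t - 1) * k}"
  proof (rule interval_endpoints_eq)
    show "t * k < 0 \<and> 0 < (t - 1) * k \<or> (t - 1) * k < 0 \<and> 0 < t * k"
      using t(1,2) \<open>k \<noteq> 0\<close> by (auto simp: mult_less_0_iff zero_less_mult_iff)
  qed (use s(1,2) pts on_uv on_xy in auto)
  then have "L ` {s - 1, s} = L ` {t * k, (t - 1) * k}" by simp
  then show ?thesis using pts by auto
qed

lemma open_segments_common_endpoint_parallel:
  fixes u v x y z :: "'a::real_vector"
  assumes zuv: "z \<in> open_segment u v" and zxy: "z \<in> open_segment x y"
    and common: "{u, v} \<inter> {x, y} \<noteq> {}"
  shows "\<exists>k. x - y = k *\<^sub>R (u - v)"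
proof -
  obtain s where s: "0 < s" "s < 1" "z = (1 - s) *\<^sub>R u + s *\<^sub>R v"
    using zuv by (auto simp: in_segment)
  obtain t where t: "0 < t" "t < 1" "z = (1 - t) *\<^sub>R x + t *\<^sub>R y"
    using zxy by (auto simp: in_segment)
  have uv: "u - z = s *\<^sub>R (u - v)" "v - z = (s - 1) *\<^sub>R (u - v)"
    unfolding s(3) by (simp_all add: algebra_simps)
  have xy: "x - z = t *\<^sub>R (x - y)" "y - z = (t - 1) *\<^sub>R (x - y)"
    unfolding t(3) by (simp_all add: algebra_simps)
  have "t \<noteq> 0" "t - 1 \<noteq> 0" using t(1,2) by simp_all
  moreover have "u = x \<or> u = y \<or> v = x \<or> v = y" using common by blast
  ultimately obtain a b where a: "a \<noteq> 0" and ab: "a *\<^sub>R (x - y) = b *\<^sub>R (u - v)"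
    using uv xy by metis
  have "x - y = (1 / a) *\<^sub>R (a *\<^sub>R (x - y))" using a by simp
  also have "\<dots> = (b / a) *\<^sub>R (u - v)" unfolding ab by simp
  finally show ?thesis ..
qed

lemma st_adj_homothet:
  assumes "convex C" and "st_adj P C u v"
  obtains l a where "l > 0" "closed_segment u v \<subseteq> homothet l a C" "P \<inter> homothet l a C = {u, v}"
proof -
  obtain l a where la: "l > 0" "P \<inter> homothet l a C = {u, v}"
    using assms(2) unfolding st_adj_def by blast
  then have "u \<in> homothet l a C" "v \<in> homothet l a C" by auto
  then have "closed_segment u v \<subseteq> homothet l a C"
    using convex_homothet[OF assms(1)] by (rule closed_segment_subset)
  with la show ?thesis by (intro that)
qed

lemma st_adj_segment_vertices:
  assumes "convex C" and "st_adj P C u v" and "w \<in> P" and "w \<in> closed_segment u v"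
  shows "w \<in> {u, v}"
proof -
  obtain l a where "closed_segment u v \<subseteq> homothet l a C" "P \<inter> homothet l a C = {u, v}"
    using st_adj_homothet[OF assms(1,2)] by metis
  then show ?thesis using assms(3,4) by blast
qed

lemma st_adj_crossing_eq:
  assumes cv: "convex C" and uv: "st_adj P C u v" and xy: "st_adj P C x y"
    and zuv: "z \<in> open_segment u v" and zxy: "z \<in> open_segment x y"
  shows "{u, v} = {x, y}"
proof (cases "\<exists>k. x - y = k *\<^sub>R (u - v)")
  case True
  then obtain k where par: "x - y = k *\<^sub>R (u - v)" ..
  have "u \<in> P" "v \<in> P" "x \<in> P" "y \<in> P" using uv xy by (simp_all add: st_adj_def)
  then have "closed_segment u v \<inter> {x, y} \<subseteq> {u, v}" "closed_segment x y \<inter> {u, v} \<subseteq> {x, y}"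
    using st_adj_segment_vertices[OF cv uv] st_adj_segment_vertices[OF cv xy] by blast+
  then show ?thesis by (rule collinear_segments_eq[OF zuv zxy par])
next
  case False
  obtain l1 a1 where H1: "l1 > 0" "closed_segment u v \<subseteq> homothet l1 a1 C" "P \<inter> homothet l1 a1 C = {u, v}"
    using st_adj_homothet[OF cv uv] .
  obtain l2 a2 where H2: "l2 > 0" "closed_segment x y \<subseteq> homothet l2 a2 C" "P \<inter> homothet l2 a2 C = {x, y}"
    using st_adj_homothet[OF cv xy] .
  have "{u, v} \<inter> {x, y} = {}"
    using open_segments_common_endpoint_parallel[OF zuv zxy] False by blast
  moreover have "u \<in> P" "v \<in> P" "x \<in> P" "y \<in> P" using uv xy by (simp_all add: st_adj_def)
  ultimately have "u \<notin> homothet l2 a2 C" "v \<notin> homothet l2 a2 C"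
    "x \<notin> homothet l1 a1 C" "y \<notin> homothet l1 a1 C"
    using H1(3) H2(3) by blast+
  moreover have "u \<in> homothet l2 a2 C \<or> v \<in> homothet l2 a2 C \<or> x \<in> homothet l1 a1 C \<or> y \<in> homothet l1 a1 C"
    using homothets_crossing_segments[OF cv H1(1) H2(1) _ _ _ _ zuv zxy False] H1(2) H2(2)
    by (meson ends_in_segment subsetD)
  ultimately show ?thesis by blast
qed

theorem mainTheorem2:
  fixes C P :: "(real^2) set"
  assumes "convex C" and "finite P"
  shows "plane_drawing P (st_adj P C)"
  unfolding plane_drawing_def
proof (intro conjI allI impI)
  fix u v w
  assume "st_adj P C u v \<and> w \<in> P \<and> w \<noteq> u \<and> w \<noteq> v"
  then show "w \<notin> closed_segment u v" using st_adj_segment_vertices[OF assms(1)] by blast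
next
  fix u v x y
  assume edges: "st_adj P C u v \<and> st_adj P C x y \<and> {u, v} \<noteq> {x, y}"
  then have uv: "st_adj P C u v" and xy: "st_adj P C x y" by blast+
  show "closed_segment u v \<inter> closed_segment x y \<subseteq> {u, v} \<inter> {x, y}"
  proof
    fix z assume z: "z \<in> closed_segment u v \<inter> closed_segment x y"
    show "z \<in> {u, v} \<inter> {x, y}"
    proof (cases "z \<in> {u, v, x, y}")
      case True
      have "z \<in> P" using True uv xy by (auto simp: st_adj_def)
      then show ?thesis
        using z st_adj_segment_vertices[OF assms(1) uv] st_adj_segment_vertices[OF assms(1) xy]
        by blast
    next
      case False
      then have "z \<in> open_segment u v" "z \<in> open_segment x y"
        using z by (auto simp: open_segment_def)
      then show ?thesis using st_adj_crossing_eq[OF assms(1) uv xy] edges by blast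
    qed
  qed
qed

end
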